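(* In the construction described in the context, for every $i\in\{1,\dots,t-1\}$ we have $C_i\subseteq F$.
   Context: Setting: $G=(V,E)$ is a connected finite undirected graph (parallel edges allowed), $w:E\to\mathbb{R}_{\ge0}$ edge weights, $c:E\to\mathbb{R}_{>0}$ edge costs, $n=|V|$. For $S\subseteq V$, $C_G(S)=\{e\in E:|e\cap S|=1\}$ (complete cut; its edges cross it) and $C_G(S,W)=\{e\in C_G(S):w(e)<W\}$ (partial cut). $F\subseteq E$ is a set with $G'=G\setminus F=(V,E\setminus F)$ connected; $B=c(F)$ and $\Delta=\mathrm{MST}(G')-\mathrm{MST}(G)$ (MST weights w.r.t. $w$). Construction: let $T$ be a minimum spanning tree of $G$ and $T\cap F=\{e_1,\dots,e_{t-1}\}$, with $t\ge2$. Removing these edges splits $T$ into components with vertex sets $A_1,\dots,A_t$ (a partition of $V$). Let $G'_{cc}$ be the multigraph with vertex set $V_{cc}=\{A_1,\dots,A_t\}$ having, for every edge $\{u,v\}\in E\setminus F$ with $u\in A_i$, $v\in A_j$, an edge between $A_i$ and $A_j$ of weight $w(\{u,v\})$ (identified with the original edge). Let $T'_{cc}$ be a minimum spanning tree of $G'_{cc}$, with edges $e'_1,\dots,e'_{t-1}$ indexed so that $w(e'_1)\le\dots\le w(e'_{t-1})$ (ties broken arbitrarily). For each $i$, deleting $e'_i,e'_{i+1},\dots,e'_{t-1}$ from $T'_{cc}$ leaves a forest in which $e'_i$ joins two components $L_i,R_i\subseteq V_{cc}$. Counters $k(A)=0$ for all $A\in V_{cc}$ initially, and $k(S)=\max_{A\in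 S}k(A)$. For $i=1,\dots,t-1$ in order: set $X_i=L_i$ if $k(L_i)\le k(R_i)$, else $X_i=R_i$; then increase $k(A)$ by $1$ for every $A\in X_i$. Identifying a set of vertices of $G'_{cc}$ with the union of the corresponding vertex sets in $V$, define $C_i=C_G(X_i,w(e'_i))$. *)

theory Defs
  imports Complex_Main
begin

text \<open>Multigraphs: vertex set V, edge identifiers E, endpoint map ep
  (an undirected edge e has endpoint set {fst (ep e), snd (ep e)}).\<close>

definition edge_rel :: "'e set \<Rightarrow> ('e \<Rightarrow> 'v \<times> 'v) \<Rightarrow> ('v \<times> 'v) set" where
  "edge_rel E ep = {(fst (ep e), snd (ep e)) | e. e \<in> E} \<union> {(snd (ep e), fst (ep e)) | e. e \<in> E}"

definition reach :: "'e set \<Rightarrow> ('e \<Rightarrow> 'v \<times> 'v) \<Rightarrow> 'v \<Rightarrow> 'v \<Rightarrow> bool" where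
  "reach E ep u v \<longleftrightarrow> (u, v) \<in> (edge_rel E ep)\<^sup>*"

definition graph_connected :: "'v set \<Rightarrow> 'e set \<Rightarrow> ('e \<Rightarrow> 'v \<times> 'v) \<Rightarrow> bool" where
  "graph_connected V E ep \<longleftrightarrow> (\<forall>u\<in>V. \<forall>v\<in>V. reach E ep u v)"

definition is_forest :: "'e set \<Rightarrow> ('e \<Rightarrow> 'v \<times> 'v) \<Rightarrow> bool" where
  "is_forest T ep \<longleftrightarrow> (\<forall>e\<in>T. \<not> reach (T - {e}) ep (fst (ep e)) (snd (ep e)))"

definition spanning_tree :: "'v set \<Rightarrow> 'e set \<Rightarrow> ('e \<Rightarrow> 'v \<times> 'v) \<Rightarrow> 'e set \<Rightarrow> bool" where
  "spanning_tree V E ep T \<longleftrightarrow> T \<subseteq> E \<and> graph_connected V T ep \<and> is_forest T ep"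

definition is_MST :: "'v set \<Rightarrow> 'e set \<Rightarrow> ('e \<Rightarrow> 'v \<times> 'v) \<Rightarrow> ('e \<Rightarrow> real) \<Rightarrow> 'e set \<Rightarrow> bool" where
  "is_MST V E ep w T \<longleftrightarrow> spanning_tree V E ep T \<and>
     (\<forall>T'. spanning_tree V E ep T' \<longrightarrow> sum w T \<le> sum w T')"

text \<open>Well-formed finite multigraph (parallel edges allowed, no loops).\<close>
definition multigraph :: "'v set \<Rightarrow> 'e set \<Rightarrow> ('e \<Rightarrow> 'v \<times> 'v) \<Rightarrow> bool" where
  "multigraph V E ep \<longleftrightarrow> finite V \<and> finite E \<and>
     (\<forall>e\<in>E. fst (ep e) \<in> V \<and> snd (ep e) \<in> V \<and> fst (ep e) \<noteq> snd (ep e))"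

definition complete_cut :: "'e set \<Rightarrow> ('e \<Rightarrow> 'v \<times> 'v) \<Rightarrow> 'v set \<Rightarrow> 'e set" where
  "complete_cut E ep S = {e \<in> E. card ({fst (ep e), snd (ep e)} \<inter> S) = 1}"

definition partial_cut :: "'e set \<Rightarrow> ('e \<Rightarrow> 'v \<times> 'v) \<Rightarrow> ('e \<Rightarrow> real) \<Rightarrow> 'v set \<Rightarrow> real \<Rightarrow> 'e set" where
  "partial_cut E ep w S W = {e \<in> complete_cut E ep S. w e < W}"

definition comp_of :: "'v set \<Rightarrow> 'e set \<Rightarrow> ('e \<Rightarrow> 'v \<times> 'v) \<Rightarrow> 'v \<Rightarrow> 'v set" where
  "comp_of V T ep u = {v \<in> V. reach T ep u v}"

definition kmax :: "('a \<Rightarrow> nat) \<Rightarrow> 'a set \<Rightarrow> nat" where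
  "kmax k S = Max (k ` S)"

text \<open>Counter process: L i, R i are the two sides at step i (0-based).
  counters L R i is the counter function before step i.\<close>
primrec counters :: "(nat \<Rightarrow> 'a set) \<Rightarrow> (nat \<Rightarrow> 'a set) \<Rightarrow> nat \<Rightarrow> 'a \<Rightarrow> nat" where
  "counters L R 0 = (\<lambda>A. 0)"
| "counters L R (Suc i) =
     (let k = counters L R i;
          X = (if kmax k (L i) \<le> kmax k (R i) then L i else R i)
      in (\<lambda>A. if A \<in> X then k A + 1 else k A))"

definition Xsel :: "(nat \<Rightarrow> 'a set) \<Rightarrow> (nat \<Rightarrow> 'a set) \<Rightarrow> nat \<Rightarrow> 'a set" where
  "Xsel L R i = (let k = counters L R i in
                   if kmax k (L i) \<le> kmax k (R i) then L i else R i)"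

end

theory Submission
  imports Defs
begin

(* The cut property of minimum spanning trees does the work. Suppose an edge e outside F with
   w(e) < w(e'_i) crossed X_i. Then e is an edge of G'_cc crossing X_i, so some edge h of T'_cc
   crosses X_i with w(h) <= w(e). But X_i is a connected component of the forest formed by
   e'_1, ..., e'_(i-1), so h is none of these edges, and w(e'_i) <= w(h) because the edges of
   T'_cc are sorted by weight. *)

abbreviation joins :: "('e \<Rightarrow> 'v \<times> 'v) \<Rightarrow> 'e \<Rightarrow> 'v \<Rightarrow> 'v \<Rightarrow> bool" where
  "joins ep e x y \<equiv> ep e = (x, y) \<or> ep e = (y, x)"

definition crosses :: "('e \<Rightarrow> 'v \<times> 'v) \<Rightarrow> 'v set \<Rightarrow> 'e \<Rightarrow> bool" where
  "crosses ep X e \<longleftrightarrow> (fst (ep e) \<in> X \<longleftrightarrow> snd (ep e) \<notin> X)"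

lemma crosses_iff_joins: "crosses ep X e \<longleftrightarrow> (\<exists>x y. joins ep e x y \<and> x \<in> X \<and> y \<notin> X)"
  unfolding crosses_def by (cases "ep e") auto

lemma edge_rel_iff: "(x, y) \<in> edge_rel S ep \<longleftrightarrow> (\<exists>e\<in>S. joins ep e x y)"
  unfolding edge_rel_def by (auto simp: prod_eq_iff)

lemma reach_refl: "reach S ep u u"
  unfolding reach_def by simp

lemma reach_trans: "reach S ep u v \<Longrightarrow> reach S ep v z \<Longrightarrow> reach S ep u z"
  unfolding reach_def by (rule rtrancl_trans)

lemma sym_edge_rel: "sym (edge_rel S ep)"
  unfolding edge_rel_def sym_def by blast

lemma reach_sym: "reach S ep u v \<Longrightarrow> reach S ep v u"
  unfolding reach_def by (meson sym_edge_rel sym_rtrancl symD)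

lemma reach_mono: "S \<subseteq> S' \<Longrightarrow> reach S ep u v \<Longrightarrow> reach S' ep u v"
  unfolding reach_def edge_rel_def by (erule rtrancl_mono[THEN subsetD, rotated]) blast

lemma reach_edge: "e \<in> S \<Longrightarrow> joins ep e x y \<Longrightarrow> reach S ep x y"
  unfolding reach_def by (rule r_into_rtrancl) (auto simp: edge_rel_iff)

lemma reach_if_edges_reach:
  assumes "reach T ep u v" and "\<And>g. g \<in> T \<Longrightarrow> reach S ep (fst (ep g)) (snd (ep g))"
  shows "reach S ep u v"
  using assms(1) unfolding reach_def[of T]
proof (induction rule: rtrancl_induct)
  case base
  show ?case by (rule reach_refl)
next
  case (step z z')
  from step.hyps(2) obtain g where g: "g \<in> T" "joins ep g z z'"
    unfolding edge_rel_iff by blast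
  then have "reach S ep z z'"
    using assms(2)[of g] reach_sym by auto
  with step.IH show ?case
    by (rule reach_trans)
qed

lemma graph_connected_if_edges_reach:
  "graph_connected V T ep \<Longrightarrow> (\<And>g. g \<in> T \<Longrightarrow> reach S ep (fst (ep g)) (snd (ep g)))
    \<Longrightarrow> graph_connected V S ep"
  unfolding graph_connected_def by (metis reach_if_edges_reach)

lemma reach_Diff_edge:
  assumes "reach S ep u v" and "joins ep h x y"
  shows "reach (S - {h}) ep u v \<or> reach (S - {h}) ep x v \<or> reach (S - {h}) ep y v"
  using assms(1) unfolding reach_def
proof (induction rule: rtrancl_induct)
  case (step z z')
  from step.hyps(2) obtain g where g: "g \<in> S" "joins ep g z z'"
    unfolding edge_rel_iff by blast
  show ?case
  proof (cases "g = h")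
    case True
    then have "z' = x \<or> z' = y"
      using g(2) assms(2) by auto
    then show ?thesis
      by (elim disjE) simp_all
  next
    case False
    then have "(z, z') \<in> edge_rel (S - {h}) ep"
      unfolding edge_rel_iff using g by blast
    then show ?thesis
      using step.IH rtrancl_into_rtrancl by metis
  qed
qed simp

lemma reach_in_uncrossed_set:
  assumes "reach S ep u v" and "u \<in> X" and "\<And>g. g \<in> S \<Longrightarrow> \<not> crosses ep X g"
  shows "v \<in> X"
  using assms(1) unfolding reach_def
proof (induction rule: rtrancl_induct)
  case base
  show ?case using assms(2) .
next
  case (step z z')
  from step.hyps(2) obtain g where "g \<in> S" "joins ep g z z'"
    unfolding edge_rel_iff by blast
  then show ?case
    using step.IH assms(3)[of g] unfolding crosses_def by auto
qed

lemma crossing_edge_on_path: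
  assumes "reach S ep a b" and "a \<in> X" and "b \<notin> X"
  shows "\<exists>g\<in>S. \<exists>x y. joins ep g x y \<and> x \<in> X \<and> y \<notin> X \<and> reach S ep y b"
  using assms unfolding reach_def
proof (induction rule: converse_rtrancl_induct)
  case (step a z)
  from step.hyps(1) obtain g where "g \<in> S" "joins ep g a z"
    unfolding edge_rel_iff by blast
  show ?case
  proof (cases "z \<in> X")
    case True
    then show ?thesis
      using step.IH step.prems(2) by simp
  next
    case False
    then show ?thesis
      using \<open>g \<in> S\<close> \<open>joins ep g a z\<close> step.prems(1) step.hyps(2)
      by (intro bexI[of _ g] exI[of _ a] exI[of _ z]) simp_all
  qed
qed simp

lemma crossing_edge_on_path_Diff:
  assumes "reach S ep a b" and "a \<in> X" and "b \<notin> X"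
  shows "\<exists>g\<in>S. \<exists>x y. joins ep g x y \<and> x \<in> X \<and> y \<notin> X
    \<and> reach (S - {g}) ep a x \<and> reach S ep y b"
proof -
  \<comment> \<open>K is the part of X that a reaches without leaving X. An edge leaving K also leaves X,
    and a reaches its inner endpoint within K, hence without using that edge.\<close>
  define S_in where "S_in = {g \<in> S. fst (ep g) \<in> X \<and> snd (ep g) \<in> X}"
  define K where "K = {v. reach S_in ep a v}"
  have K_sub: "K \<subseteq> X"
  proof
    fix v assume "v \<in> K"
    then show "v \<in> X"
      using reach_in_uncrossed_set[of S_in ep a v X] assms(2)
      unfolding K_def S_in_def crosses_def by auto
  qed
  have "a \<in> K"
    unfolding K_def by (simp add: reach_refl)
  moreover have "b \<notin> K"
    using assms(3) K_sub by blast
  ultimately obtain g x y where g: "g \<in> S" "joins ep g x y" "x \<in> K" "y \<notin> K" "reach S ep y b"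
    using crossing_edge_on_path[OF assms(1)] by blast
  have "x \<in> X"
    using g(3) K_sub by blast
  have "y \<notin> X"
  proof
    assume "y \<in> X"
    with \<open>x \<in> X\<close> g(1,2) have "g \<in> S_in"
      unfolding S_in_def by auto
    then have "reach S_in ep x y"
      using g(2) by (rule reach_edge)
    moreover have "reach S_in ep a x"
      using g(3) unfolding K_def by simp
    ultimately have "y \<in> K"
      unfolding K_def by (simp add: reach_trans)
    with g(4) show False ..
  qed
  then have "S_in \<subseteq> S - {g}"
    using g(2) unfolding S_in_def by auto
  then have "reach (S - {g}) ep a x"
    using g(3) unfolding K_def by (simp add: reach_mono)
  with g(1,2,5) \<open>x \<in> X\<close> \<open>y \<notin> X\<close> show ?thesis
    by (intro bexI[of _ g] exI[of _ x] exI[of _ y]) simp_all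
qed

lemma crossing_edge_removable:
  assumes "finite S" and "reach S ep a b" and "a \<in> X" and "b \<notin> X"
  shows "\<exists>h\<in>S. \<exists>x y. joins ep h x y \<and> x \<in> X \<and> y \<notin> X
    \<and> reach (S - {h}) ep a x \<and> reach (S - {h}) ep y b"
  using assms(1,2)
proof (induction S rule: finite_psubset_induct)
  case (psubset S)
  obtain g x y where g: "g \<in> S" "joins ep g x y" "x \<in> X" "y \<notin> X"
    "reach (S - {g}) ep a x" "reach S ep y b"
    using crossing_edge_on_path_Diff[OF psubset.prems assms(3,4)] by blast
  from reach_Diff_edge[OF g(6) g(2)]
  consider "reach (S - {g}) ep y b" | "reach (S - {g}) ep x b"
    by blast
  then show ?case
  proof cases
    case 1
    with g(1-5) show ?thesis
      by (intro bexI[of _ g] exI[of _ x] exI[of _ y]) simp_all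
  next
    case 2
    then have "reach (S - {g}) ep a b"
      using g(5) by (rule reach_trans[rotated])
    then obtain h x' y' where h: "h \<in> S - {g}" "joins ep h x' y'" "x' \<in> X" "y' \<notin> X"
      "reach (S - {g} - {h}) ep a x'" "reach (S - {g} - {h}) ep y' b"
      using psubset.IH[of "S - {g}"] g(1) by blast
    have "S - {g} - {h} \<subseteq> S - {h}"
      by blast
    with h show ?thesis
      by (intro bexI[of _ h] exI[of _ x'] exI[of _ y']) (auto intro: reach_mono)
  qed
qed

lemma connected_spanning_forest:
  assumes "finite S" and "graph_connected V S ep"
  shows "\<exists>T\<subseteq>S. graph_connected V T ep \<and> is_forest T ep"
  using assms
proof (induction S rule: finite_psubset_induct)
  case (psubset S)
  show ?case
  proof (cases "is_forest S ep")
    case True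
    with psubset.prems show ?thesis
      by blast
  next
    case False
    then obtain g where g: "g \<in> S" "reach (S - {g}) ep (fst (ep g)) (snd (ep g))"
      unfolding is_forest_def by blast
    have "graph_connected V (S - {g}) ep"
      using psubset.prems
    proof (rule graph_connected_if_edges_reach)
      fix h assume "h \<in> S"
      show "reach (S - {g}) ep (fst (ep h)) (snd (ep h))"
      proof (cases "h = g")
        case True
        with g(2) show ?thesis
          by simp
      next
        case False
        with \<open>h \<in> S\<close> show ?thesis
          by (intro reach_edge[of h]) auto
      qed
    qed
    then obtain T where "T \<subseteq> S - {g}" "graph_connected V T ep" "is_forest T ep"
      using psubset.IH[of "S - {g}"] g(1) by blast
    then show ?thesis
      by blast
  qed
qed

lemma sum_insert_le:
  fixes f :: "'a \<Rightarrow> 'b::ordered_comm_monoid_add"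
  assumes "finite A" and "0 \<le> f x"
  shows "sum f (insert x A) \<le> f x + sum f A"
  using assms by (cases "x \<in> A") (simp_all add: insert_absorb add_increasing)

lemma graph_connected_exchange:
  assumes "graph_connected V T ep" and "joins ep h x y" and "joins ep e a b"
    and "reach (T - {h}) ep a x" and "reach (T - {h}) ep y b"
  shows "graph_connected V (insert e (T - {h})) ep"
  using assms(1)
proof (rule graph_connected_if_edges_reach)
  let ?S = "insert e (T - {h})"
  have "T - {h} \<subseteq> ?S"
    by blast
  then have "reach ?S ep x a" "reach ?S ep b y"
    using assms(4,5) by (auto intro: reach_mono reach_sym)
  moreover have "reach ?S ep a b"
    using assms(3) by (intro reach_edge[of e]) auto
  ultimately have "reach ?S ep x y"
    by (meson reach_trans)
  fix g assume "g \<in> T"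
  show "reach ?S ep (fst (ep g)) (snd (ep g))"
  proof (cases "g = h")
    case True
    with assms(2) \<open>reach ?S ep x y\<close> show ?thesis
      by (auto intro: reach_sym)
  next
    case False
    with \<open>g \<in> T\<close> show ?thesis
      by (intro reach_edge[of g]) auto
  qed
qed

lemma is_MST_sum_le_connected:
  assumes mst: "is_MST V E ep w T" and nonneg: "\<forall>e\<in>E. 0 \<le> w e"
    and S: "finite S" "S \<subseteq> E" "graph_connected V S ep"
  shows "sum w T \<le> sum w S"
proof -
  obtain T' where T': "T' \<subseteq> S" "graph_connected V T' ep" "is_forest T' ep"
    using connected_spanning_forest S(1,3) by metis
  with S(2) have "spanning_tree V E ep T'"
    unfolding spanning_tree_def by blast
  with mst have "sum w T \<le> sum w T'"
    unfolding is_MST_def by blast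
  also have "\<dots> \<le> sum w S"
    using T'(1) S nonneg by (intro sum_mono2) auto
  finally show ?thesis .
qed

lemma is_MST_cut_property:
  assumes mst: "is_MST V E ep w T" and "finite E" and nonneg: "\<forall>e\<in>E. 0 \<le> w e"
    and e: "e \<in> E" "fst (ep e) \<in> V" "snd (ep e) \<in> V" "crosses ep X e"
  shows "\<exists>h\<in>T. crosses ep X h \<and> w h \<le> w e"
proof -
  from e(4) obtain a b where ab: "joins ep e a b" "a \<in> X" "b \<notin> X"
    unfolding crosses_iff_joins by blast
  have T: "T \<subseteq> E" "graph_connected V T ep"
    using mst unfolding is_MST_def spanning_tree_def by auto
  have "finite T"
    using T(1) \<open>finite E\<close> by (rule finite_subset)
  moreover have "reach T ep a b"
    using T(2) ab(1) e(2,3) unfolding graph_connected_def by auto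
  ultimately obtain h x y where h: "h \<in> T" "joins ep h x y" "x \<in> X" "y \<notin> X"
    "reach (T - {h}) ep a x" "reach (T - {h}) ep y b"
    using crossing_edge_removable ab(2,3) by metis
  have "w h \<le> w e"
  proof (rule ccontr)
    assume "\<not> w h \<le> w e"
    let ?S = "insert e (T - {h})"
    have "graph_connected V ?S ep"
      using graph_connected_exchange[OF T(2) h(2) ab(1) h(5,6)] .
    with mst nonneg \<open>finite T\<close> T(1) e(1) have "sum w T \<le> sum w ?S"
      by (intro is_MST_sum_le_connected) auto
    also have "\<dots> \<le> w e + sum w (T - {h})"
      using \<open>finite T\<close> nonneg e(1) by (intro sum_insert_le) auto
    also have "\<dots> = w e + sum w T - w h"
      using \<open>finite T\<close> h(1) by (simp add: sum_diff1)
    finally show False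
      using \<open>\<not> w h \<le> w e\<close> by linarith
  qed
  moreover have "crosses ep X h"
    unfolding crosses_iff_joins using h(2-4) by blast
  ultimately show ?thesis
    using h(1) by blast
qed

lemma comp_of_eq:
  assumes "v \<in> comp_of V S ep u"
  shows "comp_of V S ep v = comp_of V S ep u"
proof -
  have "reach S ep u v"
    using assms unfolding comp_of_def by simp
  then show ?thesis
    unfolding comp_of_def by (blast intro: reach_trans reach_sym)
qed

lemma mem_Union_comp_of_iff:
  assumes "\<X> \<subseteq> comp_of V S ep ` V" and "u \<in> V"
  shows "u \<in> \<Union>\<X> \<longleftrightarrow> comp_of V S ep u \<in> \<X>"
proof
  assume "u \<in> \<Union>\<X>"
  then obtain a where "comp_of V S ep a \<in> \<X>" "u \<in> comp_of V S ep a"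
    using assms(1) by blast
  then show "comp_of V S ep u \<in> \<X>"
    by (simp add: comp_of_eq)
next
  assume "comp_of V S ep u \<in> \<X>"
  moreover have "u \<in> comp_of V S ep u"
    using assms(2) unfolding comp_of_def by (simp add: reach_refl)
  ultimately show "u \<in> \<Union>\<X>"
    by blast
qed

lemma crosses_contracted_iff:
  assumes "\<X> \<subseteq> comp_of V S ep ` V" and "fst (ep e) \<in> V" and "snd (ep e) \<in> V"
  shows "crosses (\<lambda>e. (comp_of V S ep (fst (ep e)), comp_of V S ep (snd (ep e)))) \<X> e
    \<longleftrightarrow> crosses ep (\<Union>\<X>) e"
  using mem_Union_comp_of_iff[OF assms(1) assms(2)] mem_Union_comp_of_iff[OF assms(1) assms(3)]
  unfolding crosses_def by (simp del: Union_iff)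

lemma comp_of_not_crossed:
  assumes "g \<in> S" and "fst (ep g) \<in> V" and "snd (ep g) \<in> V"
  shows "\<not> crosses ep (comp_of V S ep u) g"
proof -
  have "reach S ep (fst (ep g)) (snd (ep g))"
    using assms(1) by (intro reach_edge[of g]) auto
  then show ?thesis
    using assms(2,3) unfolding crosses_def comp_of_def by (blast intro: reach_trans reach_sym)
qed

lemma complete_cut_iff_crosses:
  assumes "fst (ep e) \<noteq> snd (ep e)"
  shows "e \<in> complete_cut E ep S \<longleftrightarrow> e \<in> E \<and> crosses ep S e"
  using assms unfolding complete_cut_def crosses_def
  by (cases "fst (ep e) \<in> S"; cases "snd (ep e) \<in> S") auto

lemma sorted_map_nth_le_if_notin_take:
  assumes "sorted (map f xs)" and "i < length xs" and "x \<in> set xs" and "x \<notin> set (take i xs)"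
  shows "f (xs ! i) \<le> f x"
proof -
  obtain j where j: "j < length xs" "x = xs ! j"
    using assms(3) by (metis in_set_conv_nth)
  have "i \<le> j"
  proof (rule ccontr)
    assume "\<not> i \<le> j"
    then have "x \<in> set (take i xs)"
      using j by (auto simp: in_set_conv_nth)
    with assms(4) show False ..
  qed
  then have "map f xs ! i \<le> map f xs ! j"
    using assms(1) j(1) by (intro sorted_nth_mono) auto
  then show ?thesis
    using assms(2) j by simp
qed

lemma is_MST_prefix_component_cut:
  assumes mst: "is_MST V E ep w T" and "finite E" and "\<forall>e\<in>E. 0 \<le> w e"
    and ends: "\<And>g. g \<in> E \<Longrightarrow> fst (ep g) \<in> V \<and> snd (ep g) \<in> V"
    and es: "set es = T" "sorted (map w es)" "i < length es"
    and "e \<in> E" and cross: "crosses ep (comp_of V (set (take i es)) ep c) e"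
  shows "w (es ! i) \<le> w e"
proof -
  obtain h where h: "h \<in> T" "crosses ep (comp_of V (set (take i es)) ep c) h" "w h \<le> w e"
    using is_MST_cut_property[OF assms(1-3) \<open>e \<in> E\<close> _ _ cross] ends[OF \<open>e \<in> E\<close>] by blast
  have "h \<in> E"
    using h(1) mst unfolding is_MST_def spanning_tree_def by auto
  with h(2) have "h \<notin> set (take i es)"
    using comp_of_not_crossed ends by metis
  then have "w (es ! i) \<le> w h"
    using sorted_map_nth_le_if_notin_take[OF es(2,3)] h(1) es(1) by blast
  with h(3) show ?thesis
    by simp
qed

theorem mainTheorem8:
  fixes V :: "'v set" and E :: "'e set" and ep :: "'e \<Rightarrow> 'v \<times> 'v"
    and w :: "'e \<Rightarrow> real" and F T Tc :: "'e set" and es :: "'e list"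
  defines "Vcc \<equiv> comp_of V (T - F) ep ` V"
    and "epc \<equiv> (\<lambda>e. (comp_of V (T - F) ep (fst (ep e)), comp_of V (T - F) ep (snd (ep e))))"
  defines "L \<equiv> (\<lambda>i. {A \<in> Vcc. reach (set (take i es)) epc (fst (epc (es ! i))) A})"
    and "R \<equiv> (\<lambda>i. {A \<in> Vcc. reach (set (take i es)) epc (snd (epc (es ! i))) A})"
  assumes graph: "multigraph V E ep"
    and conn: "graph_connected V E ep"
    and wnn: "\<forall>e\<in>E. w e \<ge> 0"
    and FE: "F \<subseteq> E"
    and connF: "graph_connected V (E - F) ep"
    and T_mst: "is_MST V E ep w T"
    and TF: "T \<inter> F \<noteq> {}"
    and Tc_mst: "is_MST Vcc (E - F) epc w Tc"
    and es_set: "set es = Tc" and es_dist: "distinct es"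
    and es_sorted: "sorted (map w es)"
  shows "\<forall>i < length es. partial_cut E ep w (\<Union> (Xsel L R i)) (w (es ! i)) \<subseteq> F"
proof (intro allI impI subsetI)
  fix i e
  assume i: "i < length es" and e: "e \<in> partial_cut E ep w (\<Union> (Xsel L R i)) (w (es ! i))"
  have ends: "\<And>g. g \<in> E \<Longrightarrow> fst (ep g) \<in> V \<and> snd (ep g) \<in> V \<and> fst (ep g) \<noteq> snd (ep g)"
    and "finite E"
    using graph unfolding multigraph_def by auto
  then have ends_cc: "\<And>g. g \<in> E - F \<Longrightarrow> fst (epc g) \<in> Vcc \<and> snd (epc g) \<in> Vcc"
    unfolding epc_def Vcc_def by auto
  have "\<exists>c. Xsel L R i = comp_of Vcc (set (take i es)) epc c"
    unfolding Xsel_def L_def R_def comp_of_def Let_def by auto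
  then obtain c where X: "Xsel L R i = comp_of Vcc (set (take i es)) epc c"
    by blast
  have cut: "e \<in> complete_cut E ep (\<Union> (Xsel L R i))" and "w e < w (es ! i)"
    using e unfolding partial_cut_def by auto
  then have "e \<in> E"
    unfolding complete_cut_def by simp
  with cut ends have "crosses ep (\<Union> (Xsel L R i)) e"
    by (simp add: complete_cut_iff_crosses)
  moreover have "Xsel L R i \<subseteq> comp_of V (T - F) ep ` V"
    unfolding X Vcc_def comp_of_def by auto
  ultimately have "crosses epc (Xsel L R i) e"
    unfolding epc_def by (subst crosses_contracted_iff) (use ends[OF \<open>e \<in> E\<close>] in auto)
  then have cross: "crosses epc (comp_of Vcc (set (take i es)) epc c) e"
    unfolding X .
  show "e \<in> F"
  proof (rule ccontr)
    assume "e \<notin> F"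
    with \<open>e \<in> E\<close> \<open>finite E\<close> wnn have "finite (E - F)" "\<forall>g\<in>E - F. 0 \<le> w g" "e \<in> E - F"
      by auto
    from is_MST_prefix_component_cut[OF Tc_mst this(1,2) ends_cc es_set es_sorted i this(3) cross]
    have "w (es ! i) \<le> w e" .
    with \<open>w e < w (es ! i)\<close> show False
      by simp
  qed
qed

end
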